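(* Let $\Omega\subseteq\mathbb{R}^n$ be open and let $\mathbb{H}_{nf}(\Omega)$ be the set of all nearly finite H-continuous interval functions on $\Omega$, ordered by $\le$. Then $\mathbb{H}_{nf}(\Omega)$ is Dedekind order complete: (a) if $\mathcal{F}$ is a nonempty subset of $\mathbb{H}_{nf}(\Omega)$ which is bounded from above in $\mathbb{H}_{nf}(\Omega)$, then there exists $u\in\mathbb{H}_{nf}(\Omega)$ with $u=\sup\mathcal{F}$; (b) if $\mathcal{F}$ is a nonempty subset of $\mathbb{H}_{nf}(\Omega)$ which is bounded from below in $\mathbb{H}_{nf}(\Omega)$, then there exists $v\in\mathbb{H}_{nf}(\Omega)$ with $v=\inf\mathcal{F}$.
   Context: $\overline{\mathbb{R}}=\mathbb{R}\cup\{\pm\infty\}$, $\mathbb{I}\overline{\mathbb{R}}$ is the set of closed intervals $[\underline a,\overline a]$ with $\underline a\le\overline a$ in $\overline{\mathbb{R}}$, $a\in\overline{\mathbb{R}}$ identified with $[a,a]$. $\mathbb{A}(\Omega)$ is the set of functions $\Omega\to\mathbb{I}\overline{\mathbb{R}}$. Order: $[\underline a,\overline a]\le[\underline b,\overline b]$ iff $\underline a\le\underline b$ and $\overline a\le\overline b$; $f\le g$ iff $f(x)\le g(x)$ for all $x\in\Omega$. $f$ is nearly finite if there is an open dense subset $D$ of $\Omega$ such that $f(x)$ has both endpoints real for all $x\in D$. $B_\delta(x)=\{y\in\Omega:\|x-y\|<\delta\}$. For $f\in\mathbb{A}(\Omega)$: $I(f)(x)=\sup_{\delta>0}\inf\{z\in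 f(y):y\in B_\delta(x)\}$, $S(f)(x)=\inf_{\delta>0}\sup\{z\in f(y):y\in B_\delta(x)\}$, $F(f)(x)=[I(f)(x),S(f)(x)]$. $f$ is H-continuous if for every $g\in\mathbb{A}(\Omega)$ with $g(x)\subseteq f(x)$ for all $x$ one has $F(g)=f$. *)

theory Defs
  imports "HOL-Analysis.Analysis"
begin

text \<open>An interval of extended reals [a, b] with a \<le> b is represented by the pair (a, b).
  An interval function on Omega is a map f :: 'a \<Rightarrow> ereal \<times> ereal with
  fst (f x) \<le> snd (f x) for every x in Omega; values outside Omega are irrelevant.\<close>

definition interval_fun :: "'a set \<Rightarrow> ('a \<Rightarrow> ereal \<times> ereal) \<Rightarrow> bool" where
  "interval_fun \<Omega> f \<longleftrightarrow> (\<forall>x\<in>\<Omega>. fst (f x) \<le> snd (f x))"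

definition in_ivl :: "ereal \<Rightarrow> ereal \<times> ereal \<Rightarrow> bool" where
  "in_ivl z a \<longleftrightarrow> fst a \<le> z \<and> z \<le> snd a"

definition ivl_subset :: "ereal \<times> ereal \<Rightarrow> ereal \<times> ereal \<Rightarrow> bool" where
  "ivl_subset a b \<longleftrightarrow> fst b \<le> fst a \<and> snd a \<le> snd b"

definition ivl_le :: "ereal \<times> ereal \<Rightarrow> ereal \<times> ereal \<Rightarrow> bool" where
  "ivl_le a b \<longleftrightarrow> fst a \<le> fst b \<and> snd a \<le> snd b"

definition fun_le :: "'a set \<Rightarrow> ('a \<Rightarrow> ereal \<times> ereal) \<Rightarrow> ('a \<Rightarrow> ereal \<times> ereal) \<Rightarrow> bool" where
  "fun_le \<Omega> f g \<longleftrightarrow> (\<forall>x\<in>\<Omega>. ivl_le (f x) (g x))"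

definition Bd :: "'a set \<Rightarrow> real \<Rightarrow> 'a::real_normed_vector \<Rightarrow> 'a set" where
  "Bd \<Omega> \<delta> x = {y\<in>\<Omega>. norm (x - y) < \<delta>}"

definition lowerB :: "'a set \<Rightarrow> ('a::real_normed_vector \<Rightarrow> ereal \<times> ereal) \<Rightarrow> 'a \<Rightarrow> ereal" where
  "lowerB \<Omega> f x = (SUP \<delta>\<in>{0<..}. Inf {z. \<exists>y\<in>Bd \<Omega> \<delta> x. in_ivl z (f y)})"

definition upperB :: "'a set \<Rightarrow> ('a::real_normed_vector \<Rightarrow> ereal \<times> ereal) \<Rightarrow> 'a \<Rightarrow> ereal" where
  "upperB \<Omega> f x = (INF \<delta>\<in>{0<..}. Sup {z. \<exists>y\<in>Bd \<Omega> \<delta> x. in_ivl z (f y)})"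

definition Fop :: "'a set \<Rightarrow> ('a::real_normed_vector \<Rightarrow> ereal \<times> ereal) \<Rightarrow> 'a \<Rightarrow> ereal \<times> ereal" where
  "Fop \<Omega> f x = (lowerB \<Omega> f x, upperB \<Omega> f x)"

definition H_continuous :: "'a set \<Rightarrow> ('a::real_normed_vector \<Rightarrow> ereal \<times> ereal) \<Rightarrow> bool" where
  "H_continuous \<Omega> f \<longleftrightarrow>
     (\<forall>g. interval_fun \<Omega> g \<and> (\<forall>x\<in>\<Omega>. ivl_subset (g x) (f x))
          \<longrightarrow> (\<forall>x\<in>\<Omega>. Fop \<Omega> g x = f x))"

definition nearly_finite :: "'a set \<Rightarrow> ('a::topological_space \<Rightarrow> ereal \<times> ereal) \<Rightarrow> bool" where
  "nearly_finite \<Omega> f \<longleftrightarrow>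
     (\<exists>D. open D \<and> D \<subseteq> \<Omega> \<and> \<Omega> \<subseteq> closure D \<and>
          (\<forall>x\<in>D. \<bar>fst (f x)\<bar> \<noteq> \<infinity> \<and> \<bar>snd (f x)\<bar> \<noteq> \<infinity>))"

definition Hnf :: "'a::real_normed_vector set \<Rightarrow> ('a \<Rightarrow> ereal \<times> ereal) set" where
  "Hnf \<Omega> = {f. interval_fun \<Omega> f \<and> H_continuous \<Omega> f \<and> nearly_finite \<Omega> f}"

definition is_sup_in :: "'a set \<Rightarrow> ('a \<Rightarrow> ereal \<times> ereal) set \<Rightarrow> ('a \<Rightarrow> ereal \<times> ereal) set \<Rightarrow> ('a \<Rightarrow> ereal \<times> ereal) \<Rightarrow> bool" where
  "is_sup_in \<Omega> H \<F> u \<longleftrightarrow> u \<in> H \<and> (\<forall>f\<in>\<F>. fun_le \<Omega> f u) \<and>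
     (\<forall>w\<in>H. (\<forall>f\<in>\<F>. fun_le \<Omega> f w) \<longrightarrow> fun_le \<Omega> u w)"

definition is_inf_in :: "'a set \<Rightarrow> ('a \<Rightarrow> ereal \<times> ereal) set \<Rightarrow> ('a \<Rightarrow> ereal \<times> ereal) set \<Rightarrow> ('a \<Rightarrow> ereal \<times> ereal) \<Rightarrow> bool" where
  "is_inf_in \<Omega> H \<F> v \<longleftrightarrow> v \<in> H \<and> (\<forall>f\<in>\<F>. fun_le \<Omega> v f) \<and>
     (\<forall>w\<in>H. (\<forall>f\<in>\<F>. fun_le \<Omega> w f) \<longrightarrow> fun_le \<Omega> w v)"

end

theory Submission
  imports Defs
begin

text \<open>For an interval function f the lower and upper Baire operators I and S only see the
  lower resp. upper endpoints of f, so everything reduces to the operators below on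
  extended-real functions. These are monotone, I is idempotent and below the identity, S is
  idempotent and above it, and hence I \<circ> S is idempotent. H-continuity of f says that every
  selection p of f (fst f \<le> p \<le> snd f) satisfies I p = fst f and S p = snd f. Conversely, for
  every fixed point h of I \<circ> S the function (h, S h) is H-continuous.

  Given a family bounded above, let \<phi> be the pointwise supremum of the lower endpoints and
  h = I (S \<phi>). Then (h, S h) is H-continuous, it dominates the family because each member f
  satisfies fst f = I (S (fst f)), and it lies below every H-continuous upper bound w because
  fst w = I (S (fst w)) \<ge> I (S \<phi>). Being squeezed between two nearly finite functions it is
  nearly finite. Infima follow by the order-reversing involution [a, b] \<mapsto> [-b, -a].\<close>

definition lower_baire :: "'a set \<Rightarrow> ('a::real_normed_vector \<Rightarrow> ereal) \<Rightarrow> 'a \<Rightarrow> ereal" where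
  "lower_baire \<Omega> p x = (SUP \<delta>\<in>{0<..}. INF y\<in>Bd \<Omega> \<delta> x. p y)"

definition upper_baire :: "'a set \<Rightarrow> ('a::real_normed_vector \<Rightarrow> ereal) \<Rightarrow> 'a \<Rightarrow> ereal" where
  "upper_baire \<Omega> p x = (INF \<delta>\<in>{0<..}. SUP y\<in>Bd \<Omega> \<delta> x. p y)"

lemma Bd_subset: "Bd \<Omega> \<delta> x \<subseteq> \<Omega>"
  by (auto simp: Bd_def)

lemma mem_Bd_self: "x \<in> \<Omega> \<Longrightarrow> 0 < \<delta> \<Longrightarrow> x \<in> Bd \<Omega> \<delta> x"
  by (simp add: Bd_def)

lemma Bd_half_subset: "y \<in> Bd \<Omega> (\<delta>/2) x \<Longrightarrow> Bd \<Omega> (\<delta>/2) y \<subseteq> Bd \<Omega> \<delta> x"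
proof
  fix z assume y: "y \<in> Bd \<Omega> (\<delta>/2) x" and z: "z \<in> Bd \<Omega> (\<delta>/2) y"
  have "norm (x - z) \<le> norm (x - y) + norm (y - z)"
    using norm_triangle_ineq[of "x - y" "y - z"] by simp
  with y z show "z \<in> Bd \<Omega> \<delta> x" by (auto simp: Bd_def)
qed

lemma lowerB_eq_lower_baire:
  assumes "interval_fun \<Omega> f"
  shows "lowerB \<Omega> f x = lower_baire \<Omega> (\<lambda>y. fst (f y)) x"
proof -
  have "Inf {z. \<exists>y\<in>Bd \<Omega> \<delta> x. in_ivl z (f y)} = (INF y\<in>Bd \<Omega> \<delta> x. fst (f y))" for \<delta>
  proof (rule antisym)
    show "Inf {z. \<exists>y\<in>Bd \<Omega> \<delta> x. in_ivl z (f y)} \<le> (INF y\<in>Bd \<Omega> \<delta> x. fst (f y))"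
      using assms
      by (intro INF_greatest Inf_lower)
        (auto simp: in_ivl_def interval_fun_def dest: Bd_subset[THEN subsetD])
    show "(INF y\<in>Bd \<Omega> \<delta> x. fst (f y)) \<le> Inf {z. \<exists>y\<in>Bd \<Omega> \<delta> x. in_ivl z (f y)}"
      by (rule Inf_greatest) (auto simp: in_ivl_def intro: INF_lower2)
  qed
  then show ?thesis by (simp add: lowerB_def lower_baire_def)
qed

lemma upperB_eq_upper_baire:
  assumes "interval_fun \<Omega> f"
  shows "upperB \<Omega> f x = upper_baire \<Omega> (\<lambda>y. snd (f y)) x"
proof -
  have "Sup {z. \<exists>y\<in>Bd \<Omega> \<delta> x. in_ivl z (f y)} = (SUP y\<in>Bd \<Omega> \<delta> x. snd (f y))" for \<delta>
  proof (rule antisym)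
    show "(SUP y\<in>Bd \<Omega> \<delta> x. snd (f y)) \<le> Sup {z. \<exists>y\<in>Bd \<Omega> \<delta> x. in_ivl z (f y)}"
      using assms
      by (intro SUP_least Sup_upper)
        (auto simp: in_ivl_def interval_fun_def dest: Bd_subset[THEN subsetD])
    show "Sup {z. \<exists>y\<in>Bd \<Omega> \<delta> x. in_ivl z (f y)} \<le> (SUP y\<in>Bd \<Omega> \<delta> x. snd (f y))"
      by (rule Sup_least) (auto simp: in_ivl_def intro: SUP_upper2)
  qed
  then show ?thesis by (simp add: upperB_def upper_baire_def)
qed

lemma lower_baire_uminus: "lower_baire \<Omega> (\<lambda>y. - p y) = (\<lambda>x. - upper_baire \<Omega> p x)"
  by (rule ext) (simp add: lower_baire_def upper_baire_def ereal_INF_uminus_eq ereal_SUP_uminus_eq)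

lemma upper_baire_uminus: "upper_baire \<Omega> (\<lambda>y. - p y) = (\<lambda>x. - lower_baire \<Omega> p x)"
  using lower_baire_uminus[of \<Omega> "\<lambda>y. - p y"] by (simp add: fun_eq_iff)

lemma lower_baire_mono:
  "(\<And>y. y \<in> \<Omega> \<Longrightarrow> p y \<le> q y) \<Longrightarrow> lower_baire \<Omega> p x \<le> lower_baire \<Omega> q x"
  unfolding lower_baire_def using Bd_subset by (intro SUP_mono' INF_mono) blast

lemma upper_baire_mono:
  "(\<And>y. y \<in> \<Omega> \<Longrightarrow> p y \<le> q y) \<Longrightarrow> upper_baire \<Omega> p x \<le> upper_baire \<Omega> q x"
  unfolding upper_baire_def using Bd_subset by (intro INF_mono' SUP_mono) blast

lemma lower_baire_cong:
  "(\<And>y. y \<in> \<Omega> \<Longrightarrow> p y = q y) \<Longrightarrow> lower_baire \<Omega> p x = lower_baire \<Omega> q x"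
  by (intro antisym lower_baire_mono) auto

lemma lower_baire_le: "x \<in> \<Omega> \<Longrightarrow> lower_baire \<Omega> p x \<le> p x"
  unfolding lower_baire_def by (rule SUP_least, rule INF_lower2[OF mem_Bd_self]) auto

lemma upper_baire_ge: "x \<in> \<Omega> \<Longrightarrow> p x \<le> upper_baire \<Omega> p x"
  unfolding upper_baire_def by (rule INF_greatest, rule SUP_upper2[OF mem_Bd_self]) auto

lemma lower_baire_le_lower_baire_lower_baire:
  "lower_baire \<Omega> p x \<le> lower_baire \<Omega> (lower_baire \<Omega> p) x"
  unfolding lower_baire_def[of _ p x]
proof (rule SUP_least)
  fix \<delta> :: real assume \<delta>: "\<delta> \<in> {0<..}"
  have "(INF y\<in>Bd \<Omega> \<delta> x. p y) \<le> (INF y\<in>Bd \<Omega> (\<delta>/2) x. lower_baire \<Omega> p y)"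
  proof (rule INF_greatest)
    fix y assume y: "y \<in> Bd \<Omega> (\<delta>/2) x"
    have "(INF y\<in>Bd \<Omega> \<delta> x. p y) \<le> (INF z\<in>Bd \<Omega> (\<delta>/2) y. p z)"
      by (rule INF_superset_mono[OF Bd_half_subset[OF y]]) auto
    also have "\<dots> \<le> lower_baire \<Omega> p y"
      unfolding lower_baire_def by (rule SUP_upper) (use \<delta> in auto)
    finally show "(INF y\<in>Bd \<Omega> \<delta> x. p y) \<le> lower_baire \<Omega> p y" .
  qed
  also have "\<dots> \<le> lower_baire \<Omega> (lower_baire \<Omega> p) x"
    unfolding lower_baire_def[of _ "lower_baire \<Omega> p"] by (rule SUP_upper) (use \<delta> in auto)
  finally show "(INF y\<in>Bd \<Omega> \<delta> x. p y) \<le> lower_baire \<Omega> (lower_baire \<Omega> p) x" .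
qed

lemma lower_baire_idem: "x \<in> \<Omega> \<Longrightarrow> lower_baire \<Omega> (lower_baire \<Omega> p) x = lower_baire \<Omega> p x"
  by (intro antisym lower_baire_le_lower_baire_lower_baire lower_baire_le)

lemma upper_baire_idem: "x \<in> \<Omega> \<Longrightarrow> upper_baire \<Omega> (upper_baire \<Omega> p) x = upper_baire \<Omega> p x"
  using lower_baire_idem[of x \<Omega> "\<lambda>y. - p y"] by (simp add: lower_baire_uminus)

lemma lower_upper_baire_idem:
  "lower_baire \<Omega> (upper_baire \<Omega> (lower_baire \<Omega> (upper_baire \<Omega> p))) x = lower_baire \<Omega> (upper_baire \<Omega> p) x"
proof (rule antisym)
  have "lower_baire \<Omega> (upper_baire \<Omega> (lower_baire \<Omega> (upper_baire \<Omega> p))) x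
      \<le> lower_baire \<Omega> (upper_baire \<Omega> (upper_baire \<Omega> p)) x"
    by (intro lower_baire_mono upper_baire_mono lower_baire_le)
  also have "\<dots> = lower_baire \<Omega> (upper_baire \<Omega> p) x"
    by (intro lower_baire_cong upper_baire_idem)
  finally show "lower_baire \<Omega> (upper_baire \<Omega> (lower_baire \<Omega> (upper_baire \<Omega> p))) x
      \<le> lower_baire \<Omega> (upper_baire \<Omega> p) x" .
next
  have "lower_baire \<Omega> (upper_baire \<Omega> p) x \<le> lower_baire \<Omega> (lower_baire \<Omega> (upper_baire \<Omega> p)) x"
    by (rule lower_baire_le_lower_baire_lower_baire)
  also have "\<dots> \<le> lower_baire \<Omega> (upper_baire \<Omega> (lower_baire \<Omega> (upper_baire \<Omega> p))) x"
    by (intro lower_baire_mono upper_baire_ge)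
  finally show "lower_baire \<Omega> (upper_baire \<Omega> p) x
      \<le> lower_baire \<Omega> (upper_baire \<Omega> (lower_baire \<Omega> (upper_baire \<Omega> p))) x" .
qed

lemma H_continuous_selection:
  assumes "H_continuous \<Omega> f" "x \<in> \<Omega>"
    and "\<And>y. y \<in> \<Omega> \<Longrightarrow> fst (f y) \<le> p y \<and> p y \<le> snd (f y)"
  shows "lower_baire \<Omega> p x = fst (f x)" "upper_baire \<Omega> p x = snd (f x)"
proof -
  have g: "interval_fun \<Omega> (\<lambda>y. (p y, p y))" by (simp add: interval_fun_def)
  moreover have "\<forall>y\<in>\<Omega>. ivl_subset (p y, p y) (f y)"
    using assms(3) by (simp add: ivl_subset_def)
  ultimately have "Fop \<Omega> (\<lambda>y. (p y, p y)) x = f x"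
    using assms(1,2) unfolding H_continuous_def by blast
  then show "lower_baire \<Omega> p x = fst (f x)" "upper_baire \<Omega> p x = snd (f x)"
    by (auto simp: Fop_def lowerB_eq_lower_baire[OF g] upperB_eq_upper_baire[OF g] prod_eq_iff)
qed

lemma H_continuous_upper_baire_fst:
  "interval_fun \<Omega> f \<Longrightarrow> H_continuous \<Omega> f \<Longrightarrow> x \<in> \<Omega> \<Longrightarrow>
    upper_baire \<Omega> (\<lambda>y. fst (f y)) x = snd (f x)"
  by (rule H_continuous_selection) (auto simp: interval_fun_def)

lemma H_continuous_lower_baire_snd:
  "interval_fun \<Omega> f \<Longrightarrow> H_continuous \<Omega> f \<Longrightarrow> x \<in> \<Omega> \<Longrightarrow>
    lower_baire \<Omega> (\<lambda>y. snd (f y)) x = fst (f x)"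
  by (rule H_continuous_selection) (auto simp: interval_fun_def)

lemma H_continuous_of_lower_upper_fixpoint:
  assumes h: "\<And>x. x \<in> \<Omega> \<Longrightarrow> lower_baire \<Omega> (upper_baire \<Omega> h) x = h x"
  shows "interval_fun \<Omega> (\<lambda>x. (h x, upper_baire \<Omega> h x))"
    and "H_continuous \<Omega> (\<lambda>x. (h x, upper_baire \<Omega> h x))"
proof -
  show "interval_fun \<Omega> (\<lambda>x. (h x, upper_baire \<Omega> h x))"
    by (simp add: interval_fun_def upper_baire_ge)
  have lower_h: "lower_baire \<Omega> h x = h x" if "x \<in> \<Omega>" for x
  proof -
    have "lower_baire \<Omega> h x = lower_baire \<Omega> (lower_baire \<Omega> (upper_baire \<Omega> h)) x"
      by (rule lower_baire_cong) (simp add: h)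
    also have "\<dots> = h x" using that by (simp add: lower_baire_idem h)
    finally show ?thesis .
  qed
  show "H_continuous \<Omega> (\<lambda>x. (h x, upper_baire \<Omega> h x))" unfolding H_continuous_def
  proof (intro allI impI ballI)
    fix g x
    assume "interval_fun \<Omega> g \<and> (\<forall>x\<in>\<Omega>. ivl_subset (g x) (h x, upper_baire \<Omega> h x))"
      and x: "x \<in> \<Omega>"
    then have g: "interval_fun \<Omega> g"
      and lo: "\<And>y. y \<in> \<Omega> \<Longrightarrow> h y \<le> fst (g y) \<and> h y \<le> snd (g y)"
      and hi: "\<And>y. y \<in> \<Omega> \<Longrightarrow> fst (g y) \<le> upper_baire \<Omega> h y \<and> snd (g y) \<le> upper_baire \<Omega> h y"
      by (auto simp: ivl_subset_def interval_fun_def intro: order_trans)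
    have "h x \<le> lower_baire \<Omega> (\<lambda>y. fst (g y)) x"
      using lower_baire_mono[of \<Omega> h "\<lambda>y. fst (g y)" x] lo lower_h[OF x] by simp
    moreover have "lower_baire \<Omega> (\<lambda>y. fst (g y)) x \<le> h x"
      using lower_baire_mono[of \<Omega> "\<lambda>y. fst (g y)" "upper_baire \<Omega> h" x] hi h[OF x] by simp
    moreover have "upper_baire \<Omega> (\<lambda>y. snd (g y)) x \<le> upper_baire \<Omega> h x"
      using upper_baire_mono[of \<Omega> "\<lambda>y. snd (g y)" "upper_baire \<Omega> h" x] hi upper_baire_idem[OF x]
      by simp
    moreover have "upper_baire \<Omega> h x \<le> upper_baire \<Omega> (\<lambda>y. snd (g y)) x"
      using lo by (intro upper_baire_mono) simp
    ultimately show "Fop \<Omega> g x = (h x, upper_baire \<Omega> h x)"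
      by (simp add: Fop_def lowerB_eq_lower_baire[OF g] upperB_eq_upper_baire[OF g])
  qed
qed

definition H_envelope :: "'a set \<Rightarrow> ('a::real_normed_vector \<Rightarrow> ereal) \<Rightarrow> 'a \<Rightarrow> ereal \<times> ereal" where
  "H_envelope \<Omega> \<phi> x =
     (lower_baire \<Omega> (upper_baire \<Omega> \<phi>) x,
      upper_baire \<Omega> (lower_baire \<Omega> (upper_baire \<Omega> \<phi>)) x)"

lemma
  shows interval_fun_H_envelope: "interval_fun \<Omega> (H_envelope \<Omega> \<phi>)"
    and H_continuous_H_envelope: "H_continuous \<Omega> (H_envelope \<Omega> \<phi>)"
  using H_continuous_of_lower_upper_fixpoint[OF lower_upper_baire_idem]
  by (simp_all add: H_envelope_def[abs_def])

lemma le_H_envelope: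
  assumes f: "interval_fun \<Omega> f" "H_continuous \<Omega> f"
    and le: "\<And>y. y \<in> \<Omega> \<Longrightarrow> fst (f y) \<le> \<phi> y"
  shows "fun_le \<Omega> f (H_envelope \<Omega> \<phi>)"
  unfolding fun_le_def ivl_le_def
proof
  let ?h = "lower_baire \<Omega> (upper_baire \<Omega> \<phi>)"
  have snd_le: "snd (f y) \<le> upper_baire \<Omega> \<phi> y" if "y \<in> \<Omega>" for y
    using upper_baire_mono[of \<Omega> "\<lambda>y. fst (f y)" \<phi> y] le
      H_continuous_upper_baire_fst[OF f that] by simp
  have fst_le: "fst (f y) \<le> ?h y" if "y \<in> \<Omega>" for y
    using lower_baire_mono[of \<Omega> "\<lambda>y. snd (f y)" "upper_baire \<Omega> \<phi>" y] snd_le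
      H_continuous_lower_baire_snd[OF f that] by simp
  fix x assume x: "x \<in> \<Omega>"
  have "snd (f x) \<le> upper_baire \<Omega> ?h x"
    using upper_baire_mono[of \<Omega> "\<lambda>y. fst (f y)" ?h x] fst_le
      H_continuous_upper_baire_fst[OF f x] by simp
  with fst_le[OF x] show "fst (f x) \<le> fst (H_envelope \<Omega> \<phi> x) \<and> snd (f x) \<le> snd (H_envelope \<Omega> \<phi> x)"
    by (simp add: H_envelope_def)
qed

lemma H_envelope_le:
  assumes w: "interval_fun \<Omega> w" "H_continuous \<Omega> w"
    and le: "\<And>y. y \<in> \<Omega> \<Longrightarrow> \<phi> y \<le> fst (w y)"
  shows "fun_le \<Omega> (H_envelope \<Omega> \<phi>) w"
  unfolding fun_le_def ivl_le_def
proof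
  let ?h = "lower_baire \<Omega> (upper_baire \<Omega> \<phi>)"
  have h_le: "?h y \<le> fst (w y)" if y: "y \<in> \<Omega>" for y
  proof -
    have "?h y \<le> lower_baire \<Omega> (upper_baire \<Omega> (\<lambda>y. fst (w y))) y"
      using le by (intro lower_baire_mono upper_baire_mono)
    also have "\<dots> = lower_baire \<Omega> (\<lambda>y. snd (w y)) y"
      by (intro lower_baire_cong H_continuous_upper_baire_fst[OF w])
    also have "\<dots> = fst (w y)"
      by (rule H_continuous_lower_baire_snd[OF w y])
    finally show ?thesis .
  qed
  fix x assume x: "x \<in> \<Omega>"
  have "upper_baire \<Omega> ?h x \<le> snd (w x)"
    using upper_baire_mono[of \<Omega> ?h "\<lambda>y. fst (w y)" x] h_le
      H_continuous_upper_baire_fst[OF w x] by simp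
  with h_le[OF x] show "fst (H_envelope \<Omega> \<phi> x) \<le> fst (w x) \<and> snd (H_envelope \<Omega> \<phi> x) \<le> snd (w x)"
    by (simp add: H_envelope_def)
qed

lemma ereal_abs_neq_infinity_between:
  fixes a z c :: ereal
  shows "\<bar>a\<bar> \<noteq> \<infinity> \<Longrightarrow> \<bar>c\<bar> \<noteq> \<infinity> \<Longrightarrow> a \<le> z \<Longrightarrow> z \<le> c \<Longrightarrow> \<bar>z\<bar> \<noteq> \<infinity>"
  by (cases a; cases z; cases c) auto

lemma nearly_finite_between:
  assumes "nearly_finite \<Omega> a" "nearly_finite \<Omega> c" "fun_le \<Omega> a u" "fun_le \<Omega> u c"
  shows "nearly_finite \<Omega> u"
proof -
  obtain D1 where D1: "open D1" "D1 \<subseteq> \<Omega>" "\<Omega> \<subseteq> closure D1"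
     "\<forall>x\<in>D1. \<bar>fst (a x)\<bar> \<noteq> \<infinity> \<and> \<bar>snd (a x)\<bar> \<noteq> \<infinity>"
    using assms(1) unfolding nearly_finite_def by blast
  obtain D2 where D2: "open D2" "D2 \<subseteq> \<Omega>" "\<Omega> \<subseteq> closure D2"
     "\<forall>x\<in>D2. \<bar>fst (c x)\<bar> \<noteq> \<infinity> \<and> \<bar>snd (c x)\<bar> \<noteq> \<infinity>"
    using assms(2) unfolding nearly_finite_def by blast
  have "\<Omega> \<subseteq> closure (D1 \<inter> D2)"
    using closure_open_Int_superset[of D1 D2] D1 D2 by blast
  moreover have "\<bar>fst (u x)\<bar> \<noteq> \<infinity> \<and> \<bar>snd (u x)\<bar> \<noteq> \<infinity>" if "x \<in> D1 \<inter> D2" for x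
  proof -
    have "x \<in> \<Omega>" using that D1(2) by blast
    then have "ivl_le (a x) (u x)" "ivl_le (u x) (c x)"
      using assms(3,4) by (simp_all add: fun_le_def)
    moreover have "x \<in> D1" "x \<in> D2" using that by auto
    ultimately show ?thesis
      using D1(4) D2(4)
        ereal_abs_neq_infinity_between[where a = "fst (a x)" and c = "fst (c x)" and z = "fst (u x)"]
        ereal_abs_neq_infinity_between[where a = "snd (a x)" and c = "snd (c x)" and z = "snd (u x)"]
      unfolding ivl_le_def by simp
  qed
  ultimately show ?thesis
    unfolding nearly_finite_def using D1 D2 by (intro exI[of _ "D1 \<inter> D2"]) auto
qed

lemma Hnf_has_sup:
  assumes "\<F> \<subseteq> Hnf \<Omega>" "\<F> \<noteq> {}" "b \<in> Hnf \<Omega>" "\<forall>f\<in>\<F>. fun_le \<Omega> f b"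
  shows "\<exists>u\<in>Hnf \<Omega>. is_sup_in \<Omega> (Hnf \<Omega>) \<F> u"
proof -
  obtain f0 where "f0 \<in> \<F>" using assms(2) by blast
  define u where "u = H_envelope \<Omega> (\<lambda>x. SUP f\<in>\<F>. fst (f x))"
  have upper: "fun_le \<Omega> f u" if "f \<in> \<F>" for f
    using that assms(1) unfolding u_def Hnf_def
    by (intro le_H_envelope) (auto intro: SUP_upper)
  have least: "fun_le \<Omega> u w" if "w \<in> Hnf \<Omega>" "\<forall>f\<in>\<F>. fun_le \<Omega> f w" for w
    using that unfolding u_def Hnf_def
    by (intro H_envelope_le) (auto simp: fun_le_def ivl_le_def intro: SUP_least)
  have "nearly_finite \<Omega> u"
  proof (rule nearly_finite_between)
    show "nearly_finite \<Omega> f0" "nearly_finite \<Omega> b"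
      using \<open>f0 \<in> \<F>\<close> assms(1,3) by (auto simp: Hnf_def)
    show "fun_le \<Omega> f0 u" "fun_le \<Omega> u b"
      using \<open>f0 \<in> \<F>\<close> assms(3,4) by (auto intro: upper least)
  qed
  then have "u \<in> Hnf \<Omega>"
    by (simp add: Hnf_def u_def interval_fun_H_envelope H_continuous_H_envelope)
  with upper least show ?thesis
    unfolding is_sup_in_def by blast
qed

definition ivl_uminus :: "ereal \<times> ereal \<Rightarrow> ereal \<times> ereal" where
  "ivl_uminus a = (- snd a, - fst a)"

lemma ivl_uminus_comp_ivl_uminus [simp]: "ivl_uminus \<circ> (ivl_uminus \<circ> f) = f"
  by (simp add: fun_eq_iff ivl_uminus_def)

lemma fun_le_ivl_uminus_iff: "fun_le \<Omega> (ivl_uminus \<circ> f) (ivl_uminus \<circ> g) \<longleftrightarrow> fun_le \<Omega> g f"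
  by (auto simp: fun_le_def ivl_le_def ivl_uminus_def)

lemma ivl_subset_ivl_uminus_iff: "ivl_subset a (ivl_uminus b) \<longleftrightarrow> ivl_subset (ivl_uminus a) b"
  unfolding ivl_subset_def ivl_uminus_def
  by (metis ereal_minus_le_minus ereal_uminus_uminus fst_conv snd_conv)

lemma interval_fun_ivl_uminus: "interval_fun \<Omega> f \<Longrightarrow> interval_fun \<Omega> (ivl_uminus \<circ> f)"
  by (simp add: interval_fun_def ivl_uminus_def)

lemma Fop_ivl_uminus:
  assumes "interval_fun \<Omega> g"
  shows "Fop \<Omega> (ivl_uminus \<circ> g) x = ivl_uminus (Fop \<Omega> g x)"
  using assms interval_fun_ivl_uminus[OF assms]
  by (simp add: Fop_def lowerB_eq_lower_baire upperB_eq_upper_baire ivl_uminus_def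
      lower_baire_uminus upper_baire_uminus)

lemma H_continuous_ivl_uminus:
  assumes "H_continuous \<Omega> f"
  shows "H_continuous \<Omega> (ivl_uminus \<circ> f)"
  unfolding H_continuous_def
proof (intro allI impI ballI)
  fix g x
  assume "interval_fun \<Omega> g \<and> (\<forall>x\<in>\<Omega>. ivl_subset (g x) ((ivl_uminus \<circ> f) x))"
    and x: "x \<in> \<Omega>"
  then have "interval_fun \<Omega> (ivl_uminus \<circ> g)" "\<forall>x\<in>\<Omega>. ivl_subset ((ivl_uminus \<circ> g) x) (f x)"
    by (simp_all add: interval_fun_ivl_uminus ivl_subset_ivl_uminus_iff)
  then have "Fop \<Omega> (ivl_uminus \<circ> g) x = f x"
    using assms x unfolding H_continuous_def by blast
  then have "Fop \<Omega> (ivl_uminus \<circ> (ivl_uminus \<circ> g)) x = ivl_uminus (f x)"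
    using Fop_ivl_uminus[OF \<open>interval_fun \<Omega> (ivl_uminus \<circ> g)\<close>] by simp
  then show "Fop \<Omega> g x = (ivl_uminus \<circ> f) x" by simp
qed

lemma nearly_finite_ivl_uminus: "nearly_finite \<Omega> f \<Longrightarrow> nearly_finite \<Omega> (ivl_uminus \<circ> f)"
  by (simp add: nearly_finite_def ivl_uminus_def conj_commute)

lemma Hnf_ivl_uminus: "f \<in> Hnf \<Omega> \<Longrightarrow> ivl_uminus \<circ> f \<in> Hnf \<Omega>"
  by (simp add: Hnf_def interval_fun_ivl_uminus H_continuous_ivl_uminus nearly_finite_ivl_uminus)

lemma Hnf_has_inf:
  assumes "\<F> \<subseteq> Hnf \<Omega>" "\<F> \<noteq> {}" "b \<in> Hnf \<Omega>" "\<forall>f\<in>\<F>. fun_le \<Omega> b f"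
  shows "\<exists>v\<in>Hnf \<Omega>. is_inf_in \<Omega> (Hnf \<Omega>) \<F> v"
proof -
  let ?neg = "\<lambda>f. ivl_uminus \<circ> f"
  have "?neg ` \<F> \<subseteq> Hnf \<Omega>" "?neg ` \<F> \<noteq> {}" "?neg b \<in> Hnf \<Omega>"
    "\<forall>f\<in>?neg ` \<F>. fun_le \<Omega> f (?neg b)"
    using assms by (auto simp: Hnf_ivl_uminus fun_le_ivl_uminus_iff)
  then obtain u where u: "u \<in> Hnf \<Omega>" "is_sup_in \<Omega> (Hnf \<Omega>) (?neg ` \<F>) u"
    using Hnf_has_sup by blast
  have "is_inf_in \<Omega> (Hnf \<Omega>) \<F> (?neg u)"
    unfolding is_inf_in_def
  proof (intro conjI ballI impI)
    show "?neg u \<in> Hnf \<Omega>" using u(1) by (rule Hnf_ivl_uminus)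
    show "fun_le \<Omega> (?neg u) f" if "f \<in> \<F>" for f
      using u(2) that fun_le_ivl_uminus_iff[of \<Omega> f "?neg u"] unfolding is_sup_in_def by simp
    show "fun_le \<Omega> w (?neg u)" if "w \<in> Hnf \<Omega>" "\<forall>f\<in>\<F>. fun_le \<Omega> w f" for w
      using u(2) that Hnf_ivl_uminus[of w \<Omega>] fun_le_ivl_uminus_iff[of \<Omega> "?neg u" w]
      unfolding is_sup_in_def by (simp add: fun_le_ivl_uminus_iff)
  qed
  with u(1) Hnf_ivl_uminus show ?thesis by blast
qed

theorem theorem24:
  fixes \<Omega> :: "'a::euclidean_space set"
  assumes "open \<Omega>"
  shows "(\<forall>\<F>. \<F> \<subseteq> Hnf \<Omega> \<and> \<F> \<noteq> {} \<and> (\<exists>b\<in>Hnf \<Omega>. \<forall>f\<in>\<F>. fun_le \<Omega> f b)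
            \<longrightarrow> (\<exists>u\<in>Hnf \<Omega>. is_sup_in \<Omega> (Hnf \<Omega>) \<F> u))
       \<and> (\<forall>\<F>. \<F> \<subseteq> Hnf \<Omega> \<and> \<F> \<noteq> {} \<and> (\<exists>b\<in>Hnf \<Omega>. \<forall>f\<in>\<F>. fun_le \<Omega> b f)
            \<longrightarrow> (\<exists>v\<in>Hnf \<Omega>. is_inf_in \<Omega> (Hnf \<Omega>) \<F> v))"
  using Hnf_has_sup Hnf_has_inf by blast

end
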